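(* Let $(X,*,0)$ be a solid weak BCC-algebra. Then for all $x,y\in X$ belonging to the same branch of $X$ we have $x*(x*y)\leqslant y$.
   Context: A weak BCC-algebra is a set $X$ with a binary operation $*$ and a constant $0$ satisfying, for all $x,y,z\in X$: (i) $((x*y)*(z*y))*(x*z)=0$; (ii) $x*x=0$; (iii) $x*0=x$; (iv) $x*y=y*x=0$ implies $x=y$. The relation $x\leqslant y$ iff $x*y=0$ is a partial order on $X$. Let $I(X)$ be the set of minimal elements of $X$ with respect to $\leqslant$. For $a\in I(X)$ the branch initiated by $a$ is $B(a)=\{x\in X: a\leqslant x\}$; $X$ is the disjoint union of its branches, and $x,y$ "belong to the same branch" means $x,y\in B(a)$ for some $a\in I(X)$. A weak BCC-algebra is called (left) solid if $(x*y)*z=(x*z)*y$ holds for all $x,y$ belonging to the same branch and all $z\in X$. *)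

theory Defs
  imports Main
begin

definition weak_BCC :: "'a set \<Rightarrow> ('a \<Rightarrow> 'a \<Rightarrow> 'a) \<Rightarrow> 'a \<Rightarrow> bool" where
  "weak_BCC X m z \<longleftrightarrow>
     z \<in> X \<and> (\<forall>x\<in>X. \<forall>y\<in>X. m x y \<in> X) \<and>
     (\<forall>x\<in>X. \<forall>y\<in>X. \<forall>w\<in>X. m (m (m x y) (m w y)) (m x w) = z) \<and>
     (\<forall>x\<in>X. m x x = z) \<and>
     (\<forall>x\<in>X. m x z = x) \<and>
     (\<forall>x\<in>X. \<forall>y\<in>X. m x y = z \<and> m y x = z \<longrightarrow> x = y)"

definition bcc_le :: "('a \<Rightarrow> 'a \<Rightarrow> 'a) \<Rightarrow> 'a \<Rightarrow> 'a \<Rightarrow> 'a \<Rightarrow> bool" where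
  "bcc_le m z x y \<longleftrightarrow> m x y = z"

definition minimal_elems :: "'a set \<Rightarrow> ('a \<Rightarrow> 'a \<Rightarrow> 'a) \<Rightarrow> 'a \<Rightarrow> 'a set" where
  "minimal_elems X m z = {a \<in> X. \<forall>b\<in>X. bcc_le m z b a \<longrightarrow> b = a}"

definition branch :: "'a set \<Rightarrow> ('a \<Rightarrow> 'a \<Rightarrow> 'a) \<Rightarrow> 'a \<Rightarrow> 'a \<Rightarrow> 'a set" where
  "branch X m z a = {x \<in> X. bcc_le m z a x}"

definition same_branch :: "'a set \<Rightarrow> ('a \<Rightarrow> 'a \<Rightarrow> 'a) \<Rightarrow> 'a \<Rightarrow> 'a \<Rightarrow> 'a \<Rightarrow> bool" where
  "same_branch X m z x y \<longleftrightarrow>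
     (\<exists>a\<in>minimal_elems X m z. x \<in> branch X m z a \<and> y \<in> branch X m z a)"

definition solid_weak_BCC :: "'a set \<Rightarrow> ('a \<Rightarrow> 'a \<Rightarrow> 'a) \<Rightarrow> 'a \<Rightarrow> bool" where
  "solid_weak_BCC X m z \<longleftrightarrow> weak_BCC X m z \<and>
     (\<forall>x\<in>X. \<forall>y\<in>X. \<forall>w\<in>X. same_branch X m z x y \<longrightarrow> m (m x y) w = m (m x w) y)"

end

theory Submission
  imports Defs
begin

lemma weak_BCC_closed:
  "weak_BCC X m z \<Longrightarrow> x \<in> X \<Longrightarrow> y \<in> X \<Longrightarrow> m x y \<in> X"
  unfolding weak_BCC_def by blast

lemma weak_BCC_self:
  "weak_BCC X m z \<Longrightarrow> x \<in> X \<Longrightarrow> m x x = z"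
  unfolding weak_BCC_def by blast

lemma solid_exchange:
  assumes "solid_weak_BCC X m z" "x \<in> X" "y \<in> X" "w \<in> X" "same_branch X m z x y"
  shows "m (m x y) w = m (m x w) y"
  using assms unfolding solid_weak_BCC_def by blast

theorem lemma3p2:
  assumes "solid_weak_BCC X m z"
    and "x \<in> X" and "y \<in> X"
    and "same_branch X m z x y"
  shows "bcc_le m z (m x (m x y)) y"
proof -
  have W: "weak_BCC X m z"
    using assms(1) unfolding solid_weak_BCC_def by blast
  have xy: "m x y \<in> X"
    using W assms(2,3) by (rule weak_BCC_closed)
  have "m (m x (m x y)) y = m (m x y) (m x y)"
    using solid_exchange[OF assms(1,2,3) xy assms(4)] by simp
  also have "\<dots> = z"
    using W xy by (rule weak_BCC_self)
  finally show ?thesis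
    unfolding bcc_le_def .
qed

end
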